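(* Let $\mathbf{L},\mathbf{L}'\subseteq\mathbb{N}^n$ be directed hybridlinear sets with a non-degenerate intersection. Then $\mathbf{L}\cap\mathbf{L}'$ is directed hybridlinear.
   Context: Hybridlinear: $\mathbf{B}+\mathbb{N}(\mathbf{F})$ with $\mathbf{B},\mathbf{F}\subseteq\mathbb{N}^n$ finite. Preservants: $\mathbf{P}_{\mathbf{X}}=\{\mathbf{p}\in\mathbb{Z}^n\mid\mathbf{X}+\mathbf{p}\subseteq\mathbf{X}\}$; $\mathbf{x}\le_{\mathbf{P}}\mathbf{y}$ iff $\mathbf{y}-\mathbf{x}\in\mathbf{P}$. $\mathbf{X}$ is directed hybridlinear if $(\mathbf{X},\le_{\mathbf{P}_{\mathbf{X}}})$ is a well-quasi-order (well-founded, every subset has finitely many minimal elements) in which any two elements have a common upper bound. Dimension of $\mathbf{X}\subseteq\mathbb{Q}^n$: least $k$ such that $\mathbf{X}$ is covered by finitely many sets $\mathbf{b}_i+\mathbf{V}_i$, $\mathbf{V}_i$ vector subspaces of dimension $\le k$. $\mathbf{X}_1,\mathbf{X}_2$ have non-degenerate intersection if $\dim(\mathbf{X}_1\cap\mathbf{X}_2)=\dim(\mathbf{X}_1)=\dim(\mathbf{X}_2)$. *)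

theory Defs
  imports "HOL-Analysis.Analysis"
begin

text \<open>Vectors of \<open>\<int>^n\<close> are \<open>int ^ 'n\<close>; \<open>\<nat>^n\<close> is the subset of componentwise
  non-negative vectors; \<open>\<rat>^n\<close> is \<open>rat ^ 'n\<close>.\<close>

definition natvecs :: "(int ^ 'n) set" where
  "natvecs = {x. \<forall>i. 0 \<le> x $ i}"

definition Nspan :: "(int ^ 'n) set \<Rightarrow> (int ^ 'n) set" where
  "Nspan F = {\<Sum>f\<in>F. of_nat (c f) *s f | c :: int ^ 'n \<Rightarrow> nat. True}"

definition hybridlinear :: "(int ^ 'n) set \<Rightarrow> bool" where
  "hybridlinear X \<longleftrightarrow> (\<exists>B F. finite B \<and> finite F \<and> B \<subseteq> natvecs \<and> F \<subseteq> natvecs \<and>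
      X = {b + v | b v. b \<in> B \<and> v \<in> Nspan F})"

definition preservants :: "(int ^ 'n) set \<Rightarrow> (int ^ 'n) set" where
  "preservants X = {p. \<forall>x\<in>X. x + p \<in> X}"

definition ple :: "(int ^ 'n) set \<Rightarrow> int ^ 'n \<Rightarrow> int ^ 'n \<Rightarrow> bool" where
  "ple P x y \<longleftrightarrow> y - x \<in> P"

definition wqo_on :: "'a set \<Rightarrow> ('a \<Rightarrow> 'a \<Rightarrow> bool) \<Rightarrow> bool" where
  "wqo_on X le \<longleftrightarrow>
     (\<not> (\<exists>f :: nat \<Rightarrow> 'a. \<forall>k. f k \<in> X \<and> le (f (Suc k)) (f k) \<and> \<not> le (f k) (f (Suc k)))) \<and>
     (\<forall>S \<subseteq> X. finite {x \<in> S. \<forall>y \<in> S. le y x \<longrightarrow> le x y})"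

definition directed_hybridlinear :: "(int ^ 'n) set \<Rightarrow> bool" where
  "directed_hybridlinear X \<longleftrightarrow> hybridlinear X \<and>
     wqo_on X (ple (preservants X)) \<and>
     (\<forall>x\<in>X. \<forall>y\<in>X. \<exists>z\<in>X. ple (preservants X) x z \<and> ple (preservants X) y z)"

definition to_rat :: "int ^ 'n \<Rightarrow> rat ^ 'n" where
  "to_rat x = (\<chi> i. of_int (x $ i))"

definition qdim :: "(rat ^ 'n) set \<Rightarrow> nat" where
  "qdim X = (LEAST k. \<exists>(m::nat) (b :: nat \<Rightarrow> rat ^ 'n) (V :: nat \<Rightarrow> (rat ^ 'n) set).
      (\<forall>i<m. vec.subspace (V i) \<and> vec.dim (V i) \<le> k) \<and>
      X \<subseteq> (\<Union>i<m. (\<lambda>v. b i + v) ` V i))"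

definition zdim :: "(int ^ 'n) set \<Rightarrow> nat" where
  "zdim X = qdim (to_rat ` X)"

definition nondegenerate_intersection :: "(int ^ 'n) set \<Rightarrow> (int ^ 'n) set \<Rightarrow> bool" where
  "nondegenerate_intersection X1 X2 \<longleftrightarrow>
     zdim (X1 \<inter> X2) = zdim X1 \<and> zdim X1 = zdim X2"

end

theory Submission
  imports Defs
begin

text \<open>
  Write \<open>L = B + \<nat>(F)\<close> and \<open>L' = B' + \<nat>(F')\<close>. By Dickson's lemma the monoid
  \<open>\<nat>(F) \<inter> \<nat>(F')\<close> is generated by the finitely many minimal nonzero solutions of
  \<open>\<Sum> c\<^sub>f f = \<Sum> c'\<^sub>f f'\<close>, and the minimal solutions of \<open>b + \<Sum> c\<^sub>f f = b' + \<Sum> c'\<^sub>f f'\<close>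
  give finitely many base points, so \<open>L \<inter> L'\<close> is hybridlinear. Every hybridlinear subset of
  \<open>\<nat>^n\<close> is well-quasi-ordered by its preservants: they are non-negative, and the order is
  refined by the componentwise order of coefficient vectors.

  For directedness, non-degeneracy forces \<open>\<nat>(F) \<inter> \<nat>(F')\<close> to span the same rational
  space as \<open>F\<close>, and as \<open>F'\<close>. A preservant \<open>v\<close> of \<open>L\<close> lies in that space, so clearing
  denominators and adding a multiple of the sum of a spanning set gives \<open>t \<in> P\<^sub>L\<close> with
  \<open>v + t \<in> \<nat>(F) \<inter> \<nat>(F') \<subseteq> P\<^sub>L\<^sub>'\<close>, and symmetrically for \<open>L'\<close>. This lets an upper
  bound of \<open>x, y\<close> in \<open>L\<close> and one in \<open>L'\<close> be merged into a common upper bound with respect to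
  \<open>P\<^sub>L \<inter> P\<^sub>L\<^sub>'\<close>, whose elements preserve \<open>L \<inter> L'\<close>.
\<close>

section \<open>Finitely generated submonoids of \<open>\<int>^n\<close>\<close>

lemma Nspan_zero: "0 \<in> Nspan F"
  unfolding Nspan_def by (rule CollectI, rule exI[of _ "\<lambda>_. 0"]) simp

lemma sum_in_Nspan: "(\<Sum>f\<in>F. of_nat (c f) *s f) \<in> Nspan F"
  unfolding Nspan_def by blast

lemma Nspan_add:
  assumes "x \<in> Nspan F" "y \<in> Nspan F" shows "x + y \<in> Nspan F"
proof -
  obtain c where c: "x = (\<Sum>f\<in>F. of_nat (c f) *s f)" using assms(1) unfolding Nspan_def by auto
  obtain d where d: "y = (\<Sum>f\<in>F. of_nat (d f) *s f)" using assms(2) unfolding Nspan_def by auto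
  have "x + y = (\<Sum>f\<in>F. of_nat (c f + d f) *s f)"
    unfolding c d by (simp only: of_nat_add vector_sadd_rdistrib sum.distrib)
  then show ?thesis using sum_in_Nspan by metis
qed

lemma Nspan_base:
  assumes "finite F" "f \<in> F" shows "f \<in> Nspan F"
proof -
  have "(\<Sum>g\<in>F. of_nat (if g = f then 1 else 0) *s g) = (\<Sum>g\<in>F. if g = f then g else 0)"
    by (rule sum.cong) auto
  also have "\<dots> = f" using assms by (simp add: sum.delta)
  finally show ?thesis using sum_in_Nspan by metis
qed

lemma Nspan_sum:
  assumes "\<And>i. i \<in> I \<Longrightarrow> g i \<in> Nspan F" shows "sum g I \<in> Nspan F"
  using assms by (induction I rule: infinite_finite_induct) (auto intro: Nspan_zero Nspan_add)

lemma Nspan_scale: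
  assumes "x \<in> Nspan F" shows "of_nat k *s x \<in> Nspan F"
proof (induction k)
  case (Suc k)
  have "of_nat (Suc k) *s x = x + of_nat k *s x" by (simp add: vector_sadd_rdistrib)
  then show ?case using Nspan_add[OF assms Suc] by simp
qed (simp add: Nspan_zero)

lemma Nspan_minimal:
  assumes "finite F" "0 \<in> T" "\<And>x y. x \<in> T \<Longrightarrow> y \<in> T \<Longrightarrow> x + y \<in> T" "F \<subseteq> T"
  shows "Nspan F \<subseteq> T"
proof
  fix x assume "x \<in> Nspan F"
  then obtain c where c: "x = (\<Sum>f\<in>F. of_nat (c f) *s f)" unfolding Nspan_def by auto
  have scaled: "of_nat k *s f \<in> T" if "f \<in> T" for k f
    by (induction k) (use assms(2,3) that in \<open>auto simp: vector_sadd_rdistrib\<close>)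
  have "(\<Sum>f\<in>G. of_nat (c f) *s f) \<in> T" if "G \<subseteq> F" for G
    using finite_subset[OF that assms(1)] that
    by (induction G rule: finite_induct) (use assms(2,3,4) scaled in auto)
  then show "x \<in> T" using c by auto
qed

lemma Nspan_mono: "finite G \<Longrightarrow> finite F \<Longrightarrow> F \<subseteq> Nspan G \<Longrightarrow> Nspan F \<subseteq> Nspan G"
  by (rule Nspan_minimal) (auto intro: Nspan_zero Nspan_add)

lemma Nspan_subset_natvecs: "finite F \<Longrightarrow> F \<subseteq> natvecs \<Longrightarrow> Nspan F \<subseteq> natvecs"
  by (rule Nspan_minimal) (auto simp: natvecs_def)

lemma sum_scaled_diff:
  fixes F :: "(int^'n) set"
  assumes "\<forall>f\<in>F. m f \<le> c f"
  shows "(\<Sum>f\<in>F. of_nat (c f - m f) *s f) = (\<Sum>f\<in>F. of_nat (c f) *s f) - (\<Sum>f\<in>F. of_nat (m f) *s f)"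
proof -
  have "(\<Sum>f\<in>F. of_nat (c f - m f) *s f) = (\<Sum>f\<in>F. of_nat (c f) *s f - of_nat (m f) *s f)"
    using assms by (intro sum.cong) (auto simp: of_nat_diff vec_eq_iff algebra_simps)
  then show ?thesis by (simp add: sum_subtractf)
qed

lemma to_rat_add [simp]: "to_rat (x + y) = to_rat x + to_rat y"
  by (simp add: to_rat_def vec_eq_iff)

lemma to_rat_diff [simp]: "to_rat (x - y) = to_rat x - to_rat y"
  by (simp add: to_rat_def vec_eq_iff)

lemma to_rat_scale [simp]: "to_rat (k *s x) = of_int k *s to_rat x"
  by (simp add: to_rat_def vec_eq_iff)

lemma to_rat_zero [simp]: "to_rat 0 = 0"
  by (simp add: to_rat_def vec_eq_iff)

lemma to_rat_sum: "to_rat (sum g I) = (\<Sum>i\<in>I. to_rat (g i))"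
  by (induction I rule: infinite_finite_induct) auto

lemma inj_to_rat: "inj to_rat"
  by (auto simp: inj_def to_rat_def vec_eq_iff)

lemma to_rat_eq_iff [simp]: "to_rat x = to_rat y \<longleftrightarrow> x = y"
  using inj_to_rat by (auto simp: inj_def)

lemma Nspan_subset_span: "to_rat ` Nspan F \<subseteq> vec.span (to_rat ` F)"
proof clarify
  fix x assume "x \<in> Nspan F"
  then obtain c where c: "x = (\<Sum>f\<in>F. of_nat (c f) *s f)" unfolding Nspan_def by auto
  have "to_rat x = (\<Sum>f\<in>F. of_int (of_nat (c f)) *s to_rat f)"
    unfolding c to_rat_sum by simp
  also have "\<dots> \<in> vec.span (to_rat ` F)"
    by (intro vec.span_sum vec.span_scale vec.span_base imageI)
  finally show "to_rat x \<in> vec.span (to_rat ` F)" .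
qed

lemma subspace_scale_cancel:
  fixes U :: "(rat^'n) set"
  assumes "vec.subspace U" "c *s x \<in> U" "c \<noteq> 0"
  shows "x \<in> U"
proof -
  have "inverse c *s (c *s x) \<in> U" using vec.subspace_scale[OF assms(1,2)] .
  then show ?thesis using assms(3) by (simp add: vector_smult_assoc)
qed

lemma subspace_two_points_line:
  fixes U :: "(rat^'n) set"
  assumes "vec.subspace U" "a + of_nat k *s p \<in> U" "a + of_nat l *s p \<in> U" "k \<noteq> l"
  shows "p \<in> U" "a \<in> U"
proof -
  have "(a + of_nat k *s p) - (a + of_nat l *s p) = (of_nat k - of_nat l) *s p"
    by (simp add: vec_eq_iff algebra_simps)
  then have "(of_nat k - of_nat l :: rat) *s p \<in> U"
    using vec.subspace_diff[OF assms(1-3)] by metis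
  then show p: "p \<in> U" by (rule subspace_scale_cancel[OF assms(1)]) (use assms(4) in simp)
  have "(a + of_nat k *s p) - of_nat k *s p \<in> U"
    using vec.subspace_diff[OF assms(1,2) vec.subspace_scale[OF assms(1) p]] .
  then show "a \<in> U" by simp
qed

lemma pigeonhole_nat_seq:
  assumes "finite A" "\<And>k::nat. g k \<in> A"
  obtains k l where "k \<noteq> l" "g k = g l"
proof -
  have "\<not> inj g" using inj_on_finite[of g UNIV A] assms by auto
  then show ?thesis using that unfolding inj_def by blast
qed

section \<open>Dickson's lemma\<close>

definition le_on :: "'k set \<Rightarrow> ('k \<Rightarrow> nat) \<Rightarrow> ('k \<Rightarrow> nat) \<Rightarrow> bool" where
  "le_on I a b \<longleftrightarrow> (\<forall>i\<in>I. a i \<le> b i)"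

definition supp_in :: "'k set \<Rightarrow> ('k \<Rightarrow> nat) \<Rightarrow> bool" where
  "supp_in I a \<longleftrightarrow> (\<forall>i. i \<notin> I \<longrightarrow> a i = 0)"

definition minimals :: "'k set \<Rightarrow> ('k \<Rightarrow> nat) set \<Rightarrow> ('k \<Rightarrow> nat) set" where
  "minimals I S = {a\<in>S. \<forall>b\<in>S. le_on I b a \<longrightarrow> b = a}"

lemma le_on_refl: "le_on I a a"
  unfolding le_on_def by simp

lemma le_on_trans: "le_on I a b \<Longrightarrow> le_on I b c \<Longrightarrow> le_on I a c"
  unfolding le_on_def using order_trans by blast

lemma supp_in_diff: "supp_in I c \<Longrightarrow> supp_in I (\<lambda>i. c i - m i)"
  unfolding supp_in_def by simp

text \<open>Induction on \<open>|I|\<close>: every element of an antichain other than a fixed \<open>a\<^sub>0\<close> is below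
  \<open>a\<^sub>0\<close> in some coordinate \<open>i\<close>, and fixing the value there gives an antichain on \<open>I - {i}\<close>.\<close>
lemma finite_antichain:
  fixes A :: "('k \<Rightarrow> nat) set"
  assumes "finite I" "\<forall>a\<in>A. supp_in I a" "\<forall>a\<in>A. \<forall>b\<in>A. le_on I a b \<longrightarrow> a = b"
  shows "finite A"
  using assms
proof (induction "card I" arbitrary: I A rule: less_induct)
  case less
  show ?case
  proof (cases "A = {}")
    case False
    then obtain a0 where a0: "a0 \<in> A" by auto
    define Aiv where "Aiv i v = {a\<in>A. a i = v}" for i v
    have cover: "A \<subseteq> insert a0 (\<Union>i\<in>I. \<Union>v\<in>{..<a0 i}. Aiv i v)"
    proof
      fix a assume a: "a \<in> A"
      show "a \<in> insert a0 (\<Union>i\<in>I. \<Union>v\<in>{..<a0 i}. Aiv i v)"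
      proof (cases "a = a0")
        case False
        then have "\<not> le_on I a0 a" using less.prems(3) a a0 by auto
        then obtain i where "i \<in> I" "a i < a0 i" unfolding le_on_def by (auto simp: not_le)
        then show ?thesis using a unfolding Aiv_def by auto
      qed simp
    qed
    have "finite (Aiv i v)" if i: "i \<in> I" for i v
    proof -
      define h where "h a = a(i := 0)" for a :: "'k \<Rightarrow> nat"
      have inj: "inj_on h (Aiv i v)"
      proof (rule inj_onI)
        fix a b assume ab: "a \<in> Aiv i v" "b \<in> Aiv i v" "h a = h b"
        show "a = b"
        proof
          fix j show "a j = b j"
          proof (cases "j = i")
            case True then show ?thesis using ab(1,2) unfolding Aiv_def by simp
          next
            case False then show ?thesis using fun_cong[OF ab(3), of j] unfolding h_def by simp
          qed
        qed
      qed
      have le_lift: "le_on I a b" if "a \<in> Aiv i v" "b \<in> Aiv i v" "le_on (I - {i}) (h a) (h b)" for a b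
        using that unfolding le_on_def Aiv_def h_def
        by (metis (mono_tags, lifting) Diff_iff fun_upd_other mem_Collect_eq order_refl singletonD)
      have "finite (h ` Aiv i v)"
      proof (rule less.hyps[of "I - {i}"])
        show "card (I - {i}) < card I" using i less.prems(1) by (metis card_Diff1_less)
        show "\<forall>a\<in>h ` Aiv i v. supp_in (I - {i}) a"
          using less.prems(2) unfolding Aiv_def h_def supp_in_def by auto
        show "\<forall>a\<in>h ` Aiv i v. \<forall>b\<in>h ` Aiv i v. le_on (I - {i}) a b \<longrightarrow> a = b"
          using le_lift less.prems(3) unfolding Aiv_def by blast
      qed (use less.prems(1) in simp)
      then show ?thesis using inj by (rule finite_imageD)
    qed
    then have "finite (insert a0 (\<Union>i\<in>I. \<Union>v\<in>{..<a0 i}. Aiv i v))"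
      using less.prems(1) by auto
    then show ?thesis using cover by (rule finite_subset[rotated])
  qed simp
qed

lemma finite_minimals:
  assumes "finite I" "\<forall>a\<in>S. supp_in I a"
  shows "finite (minimals I S)"
  by (rule finite_antichain[OF assms(1)]) (use assms(2) in \<open>auto simp: minimals_def\<close>)

lemma ex_minimals_le:
  assumes "finite I" "\<forall>a\<in>S. supp_in I a" "a \<in> S"
  obtains m where "m \<in> minimals I S" "le_on I m a"
proof -
  let ?T = "{b\<in>S. le_on I b a}"
  obtain m where m: "m \<in> ?T" "\<forall>b\<in>?T. sum m I \<le> sum b I"
    using ex_has_least_nat[of "\<lambda>b. b \<in> ?T" a "\<lambda>b. sum b I"] assms(3) le_on_refl by auto
  have "m \<in> minimals I S"
    unfolding minimals_def
  proof (intro CollectI conjI ballI impI)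
    show "m \<in> S" using m by simp
    fix b assume b: "b \<in> S" "le_on I b m"
    then have "b \<in> ?T" using m le_on_trans by blast
    then have "sum m I \<le> sum b I" using m by blast
    then have "\<forall>i\<in>I. b i = m i"
      using sum_strict_mono_ex1[OF assms(1), of b m] b(2) unfolding le_on_def
      by (metis le_neq_implies_less not_le)
    moreover have "supp_in I b" "supp_in I m" using assms(2) b m by auto
    ultimately show "b = m" unfolding supp_in_def by (metis ext)
  qed
  then show ?thesis using that m by auto
qed

lemma sum_le_on_less:
  assumes "finite I" "le_on I m c" "supp_in I m" "m \<noteq> (\<lambda>_. 0)"
  shows "sum (\<lambda>i. c i - m i) I < sum c I"
proof -
  obtain j where j: "m j \<noteq> 0" using assms(4) by auto
  then have "j \<in> I" using assms(3) unfolding supp_in_def by auto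
  then show ?thesis using j assms(2) unfolding le_on_def
    by (intro sum_strict_mono_ex1[OF assms(1)] bexI[of _ j]) auto
qed

section \<open>Intersection of hybridlinear sets\<close>

definition linset :: "(int^'n) set \<Rightarrow> (int^'n) set \<Rightarrow> (int^'n) set" where
  "linset B F = {b + v | b v. b \<in> B \<and> v \<in> Nspan F}"

lemma hybridlinear_iff_linset:
  "hybridlinear X \<longleftrightarrow>
     (\<exists>B F. finite B \<and> finite F \<and> B \<subseteq> natvecs \<and> F \<subseteq> natvecs \<and> X = linset B F)"
  unfolding hybridlinear_def linset_def by simp

lemma linset_memI: "b \<in> B \<Longrightarrow> v \<in> Nspan F \<Longrightarrow> b + v \<in> linset B F"
  unfolding linset_def by blast

lemma linset_add_Nspan:
  assumes "x \<in> linset B F" "v \<in> Nspan F" shows "x + v \<in> linset B F"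
proof -
  obtain b u where "b \<in> B" "u \<in> Nspan F" "x = b + u" using assms(1) unfolding linset_def by auto
  then show ?thesis using linset_memI[of b B "u + v"] Nspan_add[OF _ assms(2)] by (simp add: add.assoc)
qed

lemma linset_subset_natvecs:
  "finite F \<Longrightarrow> B \<subseteq> natvecs \<Longrightarrow> F \<subseteq> natvecs \<Longrightarrow> linset B F \<subseteq> natvecs"
  unfolding linset_def natvecs_def using Nspan_subset_natvecs[of F]
  by (fastforce simp: natvecs_def add_nonneg_nonneg)

text \<open>A pair of coefficient vectors for \<open>F\<close> and \<open>F'\<close> is one function on \<open>F <+> F'\<close>,
  so that Dickson's lemma applies to both at once.\<close>

definition lsum :: "(int^'n) set \<Rightarrow> ((int^'n) + (int^'n) \<Rightarrow> nat) \<Rightarrow> int^'n" where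
  "lsum F c = (\<Sum>f\<in>F. of_nat (c (Inl f)) *s f)"

definition rsum :: "(int^'n) set \<Rightarrow> ((int^'n) + (int^'n) \<Rightarrow> nat) \<Rightarrow> int^'n" where
  "rsum F c = (\<Sum>f\<in>F. of_nat (c (Inr f)) *s f)"

lemma lsum_in_Nspan: "lsum F c \<in> Nspan F"
  unfolding lsum_def by (rule sum_in_Nspan)

lemma rsum_in_Nspan: "rsum F c \<in> Nspan F"
  unfolding rsum_def by (rule sum_in_Nspan)

lemma lsum_diff: "le_on (Inl ` F \<union> Inr ` F') m c \<Longrightarrow> lsum F (\<lambda>i. c i - m i) = lsum F c - lsum F m"
  unfolding lsum_def le_on_def by (rule sum_scaled_diff) auto

lemma rsum_diff: "le_on (Inl ` F \<union> Inr ` F') m c \<Longrightarrow> rsum F' (\<lambda>i. c i - m i) = rsum F' c - rsum F' m"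
  unfolding rsum_def le_on_def by (rule sum_scaled_diff) auto

lemma Nspan_pair_coeffs:
  assumes "h \<in> Nspan F" "h' \<in> Nspan F'"
  obtains c where "supp_in (Inl ` F \<union> Inr ` F') c" "lsum F c = h" "rsum F' c = h'"
proof -
  obtain l where l: "h = (\<Sum>f\<in>F. of_nat (l f) *s f)" using assms(1) unfolding Nspan_def by auto
  obtain r where r: "h' = (\<Sum>f\<in>F'. of_nat (r f) *s f)" using assms(2) unfolding Nspan_def by auto
  define c where "c i = (case i of Inl f \<Rightarrow> if f \<in> F then l f else 0 | Inr f \<Rightarrow> if f \<in> F' then r f else 0)" for i
  have "supp_in (Inl ` F \<union> Inr ` F') c" unfolding supp_in_def c_def by (auto split: sum.split)
  moreover have "lsum F c = h" unfolding l lsum_def c_def by (rule sum.cong) auto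
  moreover have "rsum F' c = h'" unfolding r rsum_def c_def by (rule sum.cong) auto
  ultimately show ?thesis using that by blast
qed

text \<open>The pairs of coefficient vectors with equal sums form a monoid closed under differences
  of comparable elements; its nonzero minimal elements (finitely many, by Dickson) generate it.\<close>
lemma Nspan_Int_finitely_generated:
  fixes F F' :: "(int^'n) set"
  assumes "finite F" "finite F'"
  obtains G where "finite G" "Nspan G = Nspan F \<inter> Nspan F'"
proof -
  define I where "I = Inl ` F \<union> Inr ` F'"
  have fI: "finite I" unfolding I_def using assms by simp
  define H where "H = {c. supp_in I c \<and> lsum F c = rsum F' c}"
  define G where "G = lsum F ` minimals I (H - {\<lambda>_. 0})"
  have fG: "finite G" unfolding G_def
    by (rule finite_imageI, rule finite_minimals[OF fI]) (auto simp: H_def)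
  have "G \<subseteq> Nspan F \<inter> Nspan F'"
    unfolding G_def minimals_def H_def using lsum_in_Nspan rsum_in_Nspan by fastforce
  then have sub: "Nspan G \<subseteq> Nspan F \<inter> Nspan F'"
    by (intro Nspan_minimal[OF fG]) (auto intro: Nspan_zero Nspan_add)
  have lsum_in_H: "lsum F c \<in> Nspan G" if "c \<in> H" for c
    using that
  proof (induction "sum c I" arbitrary: c rule: less_induct)
    case less
    show ?case
    proof (cases "c = (\<lambda>_. 0)")
      case True then show ?thesis by (simp add: lsum_def Nspan_zero)
    next
      case False
      then have c: "c \<in> H - {\<lambda>_. 0}" using less.prems by simp
      have "\<forall>a\<in>H - {\<lambda>_. 0}. supp_in I a" unfolding H_def by simp
      then obtain m where m: "m \<in> minimals I (H - {\<lambda>_. 0})" "le_on I m c"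
        using ex_minimals_le[OF fI _ c] by blast
      have mH: "m \<in> H" "m \<noteq> (\<lambda>_. 0)" using m(1) unfolding minimals_def by auto
      define d where "d = (\<lambda>i. c i - m i)"
      have le: "le_on (Inl ` F \<union> Inr ` F') m c" using m(2) unfolding I_def .
      have ld: "lsum F d = lsum F c - lsum F m" unfolding d_def by (rule lsum_diff[OF le])
      have rd: "rsum F' d = rsum F' c - rsum F' m" unfolding d_def by (rule rsum_diff[OF le])
      have "supp_in I d" unfolding d_def using less.prems unfolding H_def by (simp add: supp_in_diff)
      moreover have "lsum F d = rsum F' d" using ld rd less.prems mH(1) unfolding H_def by simp
      ultimately have dH: "d \<in> H" unfolding H_def by simp
      have "sum d I < sum c I" unfolding d_def
        by (rule sum_le_on_less[OF fI m(2)]) (use mH in \<open>simp_all add: H_def\<close>)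
      then have "lsum F d \<in> Nspan G" using less.hyps dH by blast
      moreover have "lsum F m \<in> Nspan G" using m(1) Nspan_base[OF fG] unfolding G_def by auto
      ultimately show ?thesis using Nspan_add[of "lsum F m" G "lsum F d"] ld by simp
    qed
  qed
  have "Nspan F \<inter> Nspan F' \<subseteq> Nspan G"
  proof
    fix h assume "h \<in> Nspan F \<inter> Nspan F'"
    then obtain c where "supp_in I c" "lsum F c = h" "rsum F' c = h"
      using Nspan_pair_coeffs[of h F h F'] unfolding I_def by blast
    then show "h \<in> Nspan G" using lsum_in_H[of c] unfolding H_def by simp
  qed
  then show ?thesis using that fG sub by blast
qed

text \<open>The base points: for each pair \<open>b \<in> B, b' \<in> B'\<close>, the minimal solutions of
  \<open>b + \<Sum> c\<^sub>f f = b' + \<Sum> c'\<^sub>f f'\<close>.\<close>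
lemma linset_Int_decomp:
  fixes B F B' F' :: "(int^'n) set"
  assumes "finite B" "finite F" "finite B'" "finite F'"
  obtains C where "finite C" "C \<subseteq> linset B F \<inter> linset B' F'"
    "\<forall>x \<in> linset B F \<inter> linset B' F'. \<exists>c\<in>C. x - c \<in> Nspan F \<inter> Nspan F'"
proof -
  define I where "I = Inl ` F \<union> Inr ` F'"
  have fI: "finite I" unfolding I_def using assms by simp
  define S where "S b b' = {c. supp_in I c \<and> b + lsum F c = b' + rsum F' c}" for b b'
  have supp: "\<forall>a\<in>S b b'. supp_in I a" for b b' unfolding S_def by simp
  define C where "C = (\<lambda>((b, b'), c). b + lsum F c) ` (SIGMA p:B \<times> B'. minimals I (S (fst p) (snd p)))"
  have "finite C" unfolding C_def
    using assms(1,3) finite_minimals[OF fI supp] by (intro finite_imageI finite_SigmaI) auto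
  moreover have "C \<subseteq> linset B F \<inter> linset B' F'"
  proof
    fix y assume "y \<in> C"
    then obtain b b' c where bc: "b \<in> B" "b' \<in> B'" "c \<in> S b b'" "y = b + lsum F c"
      unfolding C_def minimals_def by auto
    then have "y = b' + rsum F' c" unfolding S_def by simp
    then have "y \<in> linset B' F'" using linset_memI[OF bc(2) rsum_in_Nspan] by simp
    moreover have "y \<in> linset B F" unfolding bc(4) by (rule linset_memI[OF bc(1) lsum_in_Nspan])
    ultimately show "y \<in> linset B F \<inter> linset B' F'" by simp
  qed
  moreover have "\<exists>c\<in>C. x - c \<in> Nspan F \<inter> Nspan F'" if x: "x \<in> linset B F \<inter> linset B' F'" for x
  proof -
    obtain b v b' v' where bv: "b \<in> B" "v \<in> Nspan F" "x = b + v" "b' \<in> B'" "v' \<in> Nspan F'" "x = b' + v'"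
      using x unfolding linset_def by auto
    obtain c where c: "supp_in I c" "lsum F c = v" "rsum F' c = v'"
      using Nspan_pair_coeffs[OF bv(2) bv(5)] unfolding I_def by metis
    have "c \<in> S b b'" unfolding S_def using c bv by simp
    then obtain m where m: "m \<in> minimals I (S b b')" "le_on I m c"
      using ex_minimals_le[OF fI supp] by blast
    have mS: "b + lsum F m = b' + rsum F' m" using m(1) unfolding minimals_def S_def by simp
    have le: "le_on (Inl ` F \<union> Inr ` F') m c" using m(2) unfolding I_def .
    define y where "y = b + lsum F m"
    have "y \<in> C" unfolding C_def y_def using bv(1,4) m(1)
      by (intro image_eqI[of _ _ "((b, b'), m)"]) auto
    moreover have "x - y = lsum F (\<lambda>i. c i - m i)"
      unfolding y_def lsum_diff[OF le] using bv(3) c(2) by simp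
    moreover have "x - y = rsum F' (\<lambda>i. c i - m i)"
      unfolding y_def mS rsum_diff[OF le] using bv(6) c(3) by simp
    ultimately show ?thesis using lsum_in_Nspan rsum_in_Nspan by (metis IntI)
  qed
  ultimately show ?thesis using that by blast
qed

lemma linset_Int_eq:
  fixes B F B' F' :: "(int^'n) set"
  assumes "finite B" "finite F" "finite B'" "finite F'"
  obtains C G where "finite C" "finite G" "C \<subseteq> linset B F \<inter> linset B' F'"
    "Nspan G = Nspan F \<inter> Nspan F'" "linset B F \<inter> linset B' F' = linset C G"
proof -
  obtain C where C: "finite C" "C \<subseteq> linset B F \<inter> linset B' F'"
    "\<forall>x \<in> linset B F \<inter> linset B' F'. \<exists>c\<in>C. x - c \<in> Nspan F \<inter> Nspan F'"
    by (rule linset_Int_decomp[OF assms])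
  obtain G where G: "finite G" "Nspan G = Nspan F \<inter> Nspan F'"
    using Nspan_Int_finitely_generated[OF assms(2,4)] by blast
  have "linset B F \<inter> linset B' F' \<subseteq> linset C G"
  proof
    fix x assume "x \<in> linset B F \<inter> linset B' F'"
    then obtain c where "c \<in> C" "x - c \<in> Nspan G" using C(3) G(2) by blast
    then show "x \<in> linset C G" using linset_memI by fastforce
  qed
  moreover have "linset C G \<subseteq> linset B F \<inter> linset B' F'"
    using C(2) G(2) linset_add_Nspan unfolding linset_def by blast
  ultimately show ?thesis using that C G by blast
qed

lemma hybridlinear_Int:
  assumes "hybridlinear L" "hybridlinear L'"
  shows "hybridlinear (L \<inter> L')"
proof -
  obtain B F where BF: "finite B" "finite F" "B \<subseteq> natvecs" "F \<subseteq> natvecs" "L = linset B F"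
    using assms(1) unfolding hybridlinear_iff_linset by blast
  obtain B' F' where BF': "finite B'" "finite F'" "L' = linset B' F'"
    using assms(2) unfolding hybridlinear_iff_linset by blast
  obtain C G where CG: "finite C" "finite G" "C \<subseteq> L \<inter> L'" "Nspan G = Nspan F \<inter> Nspan F'"
    "L \<inter> L' = linset C G"
    using linset_Int_eq[OF BF(1,2) BF'(1,2)] unfolding BF(5) BF'(3) by blast
  have "C \<subseteq> natvecs" using CG(3) linset_subset_natvecs[OF BF(2,3,4)] BF(5) by blast
  moreover have "G \<subseteq> natvecs"
    using Nspan_base[OF CG(2)] CG(4) Nspan_subset_natvecs[OF BF(2,4)] by blast
  ultimately show ?thesis unfolding hybridlinear_iff_linset using CG by blast
qed

section \<open>Preservants and the well-quasi-order\<close>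

lemma zero_preservant: "0 \<in> preservants X"
  unfolding preservants_def by simp

lemma preservants_add: "p \<in> preservants X \<Longrightarrow> q \<in> preservants X \<Longrightarrow> p + q \<in> preservants X"
  unfolding preservants_def by (simp add: add.assoc[symmetric])

lemma preservants_scale: "p \<in> preservants X \<Longrightarrow> of_nat k *s p \<in> preservants X"
proof (induction k)
  case (Suc k)
  have "of_nat (Suc k) *s p = p + of_nat k *s p" by (simp add: vector_sadd_rdistrib)
  then show ?case using preservants_add[OF Suc.prems Suc.IH[OF Suc.prems]] by simp
qed (simp add: zero_preservant)

lemma preservants_Int: "preservants L \<inter> preservants L' \<subseteq> preservants (L \<inter> L')"
  unfolding preservants_def by blast

lemma Nspan_subset_preservants: "Nspan F \<subseteq> preservants (linset B F)"
  unfolding preservants_def using linset_add_Nspan by blast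

lemma preservant_natvecs:
  assumes "X \<subseteq> natvecs" "x \<in> X" "p \<in> preservants X"
  shows "p \<in> natvecs"
  unfolding natvecs_def
proof (intro CollectI allI)
  fix i
  show "0 \<le> p $ i"
  proof (rule ccontr)
    assume "\<not> 0 \<le> p $ i"
    then have "p $ i \<le> -1" by simp
    define k where "k = Suc (nat (x $ i))"
    have "x + of_nat k *s p \<in> X"
      using preservants_scale[OF assms(3)] assms(2) unfolding preservants_def by blast
    then have "0 \<le> x $ i + int k * p $ i" using assms(1) unfolding natvecs_def by auto
    moreover have "int k * p $ i \<le> - int k" using mult_left_mono[OF \<open>p $ i \<le> -1\<close>, of "int k"] by simp
    moreover have "x $ i < int k" unfolding k_def by simp
    ultimately show False by simp
  qed
qed

lemma ple_preservants_antisym: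
  assumes "X \<subseteq> natvecs" "x \<in> X" "ple (preservants X) x y" "ple (preservants X) y x"
  shows "x = y"
proof -
  have "y - x \<in> natvecs" "x - y \<in> natvecs"
    using preservant_natvecs[OF assms(1,2)] assms(3,4) unfolding ple_def by auto
  then show ?thesis unfolding natvecs_def by (simp add: vec_eq_iff order_antisym)
qed

text \<open>The coordinate sum strictly decreases along a strictly descending chain.\<close>
lemma ple_preservants_no_infinite_descent:
  fixes X :: "(int^'n) set"
  assumes "X \<subseteq> natvecs"
  shows "\<not> (\<exists>f :: nat \<Rightarrow> int^'n. \<forall>k. f k \<in> X \<and> ple (preservants X) (f (Suc k)) (f k) \<and>
                                          \<not> ple (preservants X) (f k) (f (Suc k)))"
proof
  assume "\<exists>f :: nat \<Rightarrow> int^'n. \<forall>k. f k \<in> X \<and> ple (preservants X) (f (Suc k)) (f k) \<and>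
                                   \<not> ple (preservants X) (f k) (f (Suc k))"
  then obtain f :: "nat \<Rightarrow> int^'n" where f: "\<And>k. f k \<in> X"
      "\<And>k. f k - f (Suc k) \<in> preservants X" "\<And>k. f (Suc k) - f k \<notin> preservants X"
    unfolding ple_def by blast
  define \<mu> where "\<mu> x = nat (\<Sum>i\<in>UNIV. x $ i)" for x :: "int^'n"
  have "(f (Suc k), f k) \<in> Wellfounded.measure \<mu>" for k
  proof -
    define d where "d = f k - f (Suc k)"
    have d_nonneg: "\<And>j. 0 \<le> d $ j"
      using preservant_natvecs[OF assms f(1) f(2)] unfolding d_def natvecs_def by blast
    have "d \<noteq> 0" using f(3)[of k] zero_preservant unfolding d_def by force
    then obtain i where "d $ i \<noteq> 0" by (auto simp: vec_eq_iff)
    then have "0 < (\<Sum>j\<in>UNIV. d $ j)"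
      using d_nonneg by (intro sum_pos2[of UNIV i]) (auto simp: order_less_le)
    moreover have "(\<Sum>j\<in>UNIV. f k $ j) = (\<Sum>j\<in>UNIV. f (Suc k) $ j) + (\<Sum>j\<in>UNIV. d $ j)"
      unfolding d_def by (simp add: sum.distrib[symmetric])
    moreover have "0 \<le> (\<Sum>j\<in>UNIV. f (Suc k) $ j)"
      using f(1) assms unfolding natvecs_def by (auto intro: sum_nonneg)
    ultimately show ?thesis unfolding \<mu>_def by simp
  qed
  then show False using wf_measure[of \<mu>] unfolding wf_iff_no_infinite_down_chain by blast
qed

lemma Nspan_supported_coeffs:
  assumes "v \<in> Nspan G"
  obtains l where "supp_in G l" "v = (\<Sum>g\<in>G. of_nat (l g) *s g)"
proof -
  obtain c where c: "v = (\<Sum>g\<in>G. of_nat (c g) *s g)" using assms unfolding Nspan_def by auto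
  have "v = (\<Sum>g\<in>G. of_nat (if g \<in> G then c g else 0) *s g)" unfolding c by (rule sum.cong) auto
  moreover have "supp_in G (\<lambda>g. if g \<in> G then c g else 0)" unfolding supp_in_def by simp
  ultimately show ?thesis using that by blast
qed

text \<open>Elements of \<open>C + \<nat>(G)\<close> are compared through their coefficient vectors, and the
  preservant order is antisymmetric on \<open>\<nat>^n\<close>, so each minimal element comes from a
  Dickson-minimal coefficient vector.\<close>
lemma finite_minimal_preservants_linset:
  fixes C G :: "(int^'n) set"
  assumes "finite C" "finite G" "linset C G \<subseteq> natvecs" "S \<subseteq> linset C G"
  shows "finite {x \<in> S. \<forall>y \<in> S. ple (preservants (linset C G)) y x \<longrightarrow> ple (preservants (linset C G)) x y}"
    (is "finite ?M")
proof -
  let ?P = "preservants (linset C G)"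
  define T where "T c = {l. supp_in G l \<and> c + (\<Sum>g\<in>G. of_nat (l g) *s g) \<in> S}" for c
  have "?M \<subseteq> (\<Union>c\<in>C. (\<lambda>l. c + (\<Sum>g\<in>G. of_nat (l g) *s g)) ` minimals G (T c))"
  proof
    fix x assume xM: "x \<in> ?M"
    then have xS: "x \<in> S" by simp
    then obtain c v where cv: "c \<in> C" "v \<in> Nspan G" "x = c + v"
      using assms(4) unfolding linset_def by auto
    obtain l where l: "supp_in G l" "v = (\<Sum>g\<in>G. of_nat (l g) *s g)"
      using Nspan_supported_coeffs[OF cv(2)] by blast
    have lT: "l \<in> T c" unfolding T_def using l xS cv(3) by simp
    have "\<forall>a\<in>T c. supp_in G a" unfolding T_def by simp
    then obtain m where m: "m \<in> minimals G (T c)" "le_on G m l"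
      using ex_minimals_le[OF assms(2) _ lT] by blast
    define y where "y = c + (\<Sum>g\<in>G. of_nat (m g) *s g)"
    have yS: "y \<in> S" using m(1) unfolding minimals_def T_def y_def by simp
    have "x - y = (\<Sum>g\<in>G. of_nat (l g - m g) *s g)"
      unfolding y_def cv(3) l(2) using m(2) unfolding le_on_def by (subst sum_scaled_diff) auto
    then have "x - y \<in> Nspan G" by (simp add: sum_in_Nspan)
    then have yx: "ple ?P y x" unfolding ple_def by (rule subsetD[OF Nspan_subset_preservants])
    then have "ple ?P x y" using xM yS by simp
    moreover have "x \<in> linset C G" using xS assms(4) by (rule subsetD[rotated])
    ultimately have "x = y" using ple_preservants_antisym[OF assms(3) _ _ yx] by simp
    then show "x \<in> (\<Union>c\<in>C. (\<lambda>l. c + (\<Sum>g\<in>G. of_nat (l g) *s g)) ` minimals G (T c))"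
      using cv(1) m(1) unfolding y_def by blast
  qed
  moreover have "finite (\<Union>c\<in>C. (\<lambda>l. c + (\<Sum>g\<in>G. of_nat (l g) *s g)) ` minimals G (T c))"
    using assms(1) by (intro finite_UN_I finite_imageI finite_minimals[OF assms(2)]) (auto simp: T_def)
  ultimately show ?thesis by (rule finite_subset)
qed

lemma wqo_on_hybridlinear:
  assumes "hybridlinear X" "X \<subseteq> natvecs"
  shows "wqo_on X (ple (preservants X))"
proof -
  obtain C G where CG: "finite C" "finite G" "X = linset C G"
    using assms(1) unfolding hybridlinear_iff_linset by blast
  have "finite {x \<in> S. \<forall>y \<in> S. ple (preservants X) y x \<longrightarrow> ple (preservants X) x y}"
    if "S \<subseteq> X" for S
    using finite_minimal_preservants_linset[OF CG(1,2)] assms(2) that unfolding CG(3) by simp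
  then show ?thesis
    unfolding wqo_on_def using ple_preservants_no_infinite_descent[OF assms(2)] by simp
qed

section \<open>Dimension\<close>

lemma qdim_cover:
  "\<exists>m (b :: nat \<Rightarrow> rat ^ 'n) (V :: nat \<Rightarrow> (rat ^ 'n) set).
      (\<forall>i<m. vec.subspace (V i) \<and> vec.dim (V i) \<le> qdim X) \<and> X \<subseteq> (\<Union>i<m. (\<lambda>v. b i + v) ` V i)"
  unfolding qdim_def
  by (rule LeastI_ex, rule exI[of _ "vec.dim (UNIV :: (rat ^ 'n) set)"],
      rule exI[of _ 1], rule exI[of _ "\<lambda>_. 0"], rule exI[of _ "\<lambda>_. UNIV"]) auto

text \<open>Induction on \<open>F\<close>: along the ray \<open>b + k f\<close> two points fall into the same piece, which
  then contains the whole line.\<close>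
lemma translated_Nspan_in_cover:
  fixes F :: "(int^'n) set" and a :: "nat \<Rightarrow> rat^'n" and U :: "nat \<Rightarrow> (rat^'n) set"
  assumes "finite F" "\<forall>i<m. vec.subspace (U i)"
    "\<forall>x \<in> Nspan F. to_rat (b + x) \<in> (\<Union>i<m. (\<lambda>v. a i + v) ` U i)"
  shows "\<exists>i<m. to_rat b - a i \<in> U i \<and> to_rat ` F \<subseteq> U i"
  using assms(1,3)
proof (induction F arbitrary: b rule: finite_induct)
  case empty
  then obtain i where "i < m" "to_rat b \<in> (\<lambda>v. a i + v) ` U i" using Nspan_zero by fastforce
  then show ?case by (auto simp: algebra_simps)
next
  case (insert f F)
  have fin: "finite (insert f F)" using insert by simp
  have sub: "Nspan F \<subseteq> Nspan (insert f F)"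
    using Nspan_base[OF fin] insert(1) by (intro Nspan_mono[OF fin]) auto
  have f: "f \<in> Nspan (insert f F)" using Nspan_base[OF fin] by simp
  have "\<exists>i<m. to_rat (b + of_nat k *s f) - a i \<in> U i \<and> to_rat ` F \<subseteq> U i" for k
  proof (rule insert.IH, intro ballI)
    fix x assume "x \<in> Nspan F"
    then have "of_nat k *s f + x \<in> Nspan (insert f F)"
      using Nspan_add[OF Nspan_scale[OF f]] sub by blast
    then have "to_rat (b + (of_nat k *s f + x)) \<in> (\<Union>i<m. (\<lambda>v. a i + v) ` U i)"
      by (rule bspec[OF insert.prems])
    then show "to_rat (b + of_nat k *s f + x) \<in> (\<Union>i<m. (\<lambda>v. a i + v) ` U i)"
      by (simp add: add.assoc)
  qed
  then obtain g where g: "\<And>k. g k < m" "\<And>k. to_rat (b + of_nat k *s f) - a (g k) \<in> U (g k)"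
      "\<And>k. to_rat ` F \<subseteq> U (g k)"
    by metis
  obtain k l where kl: "k \<noteq> l" "g k = g l"
    using pigeonhole_nat_seq[of "{..<m}" g] g(1) by auto
  let ?i = "g k"
  have "(to_rat b - a ?i) + of_nat k *s to_rat f \<in> U ?i"
       "(to_rat b - a ?i) + of_nat l *s to_rat f \<in> U ?i"
    using g(2)[of k] g(2)[of l] kl(2) by (simp_all add: algebra_simps)
  then have "to_rat f \<in> U ?i" "to_rat b - a ?i \<in> U ?i"
    using subspace_two_points_line[OF _ _ _ kl(1)] assms(2) g(1) by blast+
  then show ?case using g(1,3) by blast
qed

lemma dim_le_zdim:
  fixes F :: "(int^'n) set"
  assumes "finite F" "\<And>x. x \<in> Nspan F \<Longrightarrow> b + x \<in> X"
  shows "vec.dim (to_rat ` F) \<le> zdim X"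
proof -
  obtain m and a :: "nat \<Rightarrow> rat^'n" and V :: "nat \<Rightarrow> (rat^'n) set"
    where V: "\<forall>i<m. vec.subspace (V i) \<and> vec.dim (V i) \<le> qdim (to_rat ` X)"
      and cover: "to_rat ` X \<subseteq> (\<Union>i<m. (\<lambda>v. a i + v) ` V i)"
    using qdim_cover[of "to_rat ` X"] by blast
  have "\<forall>x\<in>Nspan F. to_rat (b + x) \<in> (\<Union>i<m. (\<lambda>v. a i + v) ` V i)"
    using assms(2) cover by blast
  then obtain i where i: "i < m" "to_rat ` F \<subseteq> V i"
    using translated_Nspan_in_cover[OF assms(1)] V by blast
  then have "vec.dim (to_rat ` F) \<le> vec.dim (V i)" by (intro vec.dim_subset)
  then show ?thesis using V i(1) unfolding zdim_def by fastforce
qed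

lemma zdim_le_dim:
  fixes X :: "(int^'n) set"
  assumes "finite C" "vec.subspace W" "\<And>x. x \<in> X \<Longrightarrow> \<exists>c\<in>C. to_rat x - to_rat c \<in> W"
  shows "zdim X \<le> vec.dim W"
proof -
  obtain cs where cs: "set cs = C" using finite_list[OF assms(1)] by blast
  have "to_rat ` X \<subseteq> (\<Union>i<length cs. (\<lambda>v. to_rat (cs ! i) + v) ` W)"
  proof
    fix y assume "y \<in> to_rat ` X"
    then obtain x c where x: "x \<in> X" "y = to_rat x" "c \<in> C" "to_rat x - to_rat c \<in> W"
      using assms(3) by blast
    then obtain i where i: "i < length cs" "cs ! i = c" unfolding cs[symmetric] in_set_conv_nth by blast
    have "y = to_rat (cs ! i) + (to_rat x - to_rat c)" using x i by simp
    then show "y \<in> (\<Union>i<length cs. (\<lambda>v. to_rat (cs ! i) + v) ` W)" using i(1) x(4) by blast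
  qed
  then show ?thesis
    unfolding zdim_def qdim_def using assms(2)
    by (intro Least_le exI[of _ "length cs"] exI[of _ "\<lambda>i. to_rat (cs ! i)"] exI[of _ "\<lambda>_. W"]) simp
qed

lemma span_eq_if_zdim_eq:
  fixes F M C :: "(int^'n) set"
  assumes "finite F" "b \<in> B" "finite C" "M \<subseteq> Nspan F"
    "\<And>x. x \<in> X \<Longrightarrow> \<exists>c\<in>C. x - c \<in> M" "zdim X = zdim (linset B F)"
  shows "vec.span (to_rat ` M) = vec.span (to_rat ` F)"
proof (rule vec.subspace_dim_equal)
  let ?W = "vec.span (to_rat ` M)"
  have "zdim X \<le> vec.dim ?W"
  proof (rule zdim_le_dim[OF assms(3)])
    fix x assume "x \<in> X"
    then obtain c where "c \<in> C" "x - c \<in> M" using assms(5) by blast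
    then show "\<exists>c\<in>C. to_rat x - to_rat c \<in> ?W"
      using vec.span_base[OF imageI[of "x - c" M to_rat]] by auto
  qed simp
  moreover have "vec.dim (to_rat ` F) \<le> zdim (linset B F)"
    using linset_memI[OF assms(2)] by (rule dim_le_zdim[OF assms(1)])
  ultimately show "vec.dim (vec.span (to_rat ` F)) \<le> vec.dim ?W"
    using assms(6) by (simp add: vec.dim_span)
  show "?W \<subseteq> vec.span (to_rat ` F)"
    using assms(4) Nspan_subset_span by (intro vec.span_minimal) auto
qed simp_all

section \<open>Directedness of the intersection\<close>

lemma finite_subset_same_span:
  fixes M :: "(int^'n) set"
  obtains T where "finite T" "T \<subseteq> M" "vec.span (to_rat ` T) = vec.span (to_rat ` M)"
proof -
  obtain B0 where B0: "B0 \<subseteq> to_rat ` M" "vec.independent B0" "to_rat ` M \<subseteq> vec.span B0"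
    using vec.maximal_independent_subset by blast
  obtain T where T: "T \<subseteq> M" "finite T" "B0 = to_rat ` T"
    using finite_subset_image[OF vec.finiteI_independent[OF B0(2)] B0(1)] by blast
  have "vec.span (to_rat ` T) = vec.span (to_rat ` M)"
  proof
    show "vec.span (to_rat ` T) \<subseteq> vec.span (to_rat ` M)"
      using T(1) by (intro vec.span_mono image_mono)
    show "vec.span (to_rat ` M) \<subseteq> vec.span (to_rat ` T)"
      using B0(3) T(3) by (intro vec.span_minimal) simp_all
  qed
  then show ?thesis using that T by blast
qed

lemma preservant_in_span:
  fixes B F :: "(int^'n) set"
  assumes "finite B" "x \<in> linset B F" "p \<in> preservants (linset B F)"
  shows "to_rat p \<in> vec.span (to_rat ` F)"
proof -
  let ?S = "vec.span (to_rat ` F)"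
  have "\<exists>b\<in>B. to_rat x - to_rat b + of_nat k *s to_rat p \<in> ?S" for k
  proof -
    have "x + of_nat k *s p \<in> linset B F"
      using preservants_scale[OF assms(3)] assms(2) unfolding preservants_def by blast
    then obtain b v where "b \<in> B" "v \<in> Nspan F" "x + of_nat k *s p = b + v"
      unfolding linset_def by blast
    moreover have "to_rat v \<in> ?S" using \<open>v \<in> Nspan F\<close> Nspan_subset_span by blast
    moreover have "to_rat x - to_rat b + of_nat k *s to_rat p = to_rat v"
      using arg_cong[OF \<open>x + of_nat k *s p = b + v\<close>, of to_rat] by (simp add: algebra_simps)
    ultimately show ?thesis by (metis (no_types, lifting))
  qed
  then have "\<forall>k. \<exists>b. b \<in> B \<and> to_rat x - to_rat b + of_nat k *s to_rat p \<in> ?S" by blast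
  then obtain h where h: "\<And>k. h k \<in> B" "\<And>k. to_rat x - to_rat (h k) + of_nat k *s to_rat p \<in> ?S"
    using choice[of "\<lambda>k b. b \<in> B \<and> to_rat x - to_rat b + of_nat k *s to_rat p \<in> ?S"] by blast
  obtain k l where "k \<noteq> l" "h k = h l" using pigeonhole_nat_seq[OF assms(1) h(1)] .
  then show ?thesis
    using subspace_two_points_line(1)[OF vec.subspace_span h(2)[of k]] h(2)[of l] by simp
qed

lemma common_denominator:
  fixes r :: "'a \<Rightarrow> rat"
  assumes "finite A"
  obtains m :: nat where "m > 0" "\<And>t. t \<in> A \<Longrightarrow> of_nat m * r t \<in> \<int>"
proof -
  define m where "m = (\<Prod>t\<in>A. nat (snd (quotient_of (r t))))"
  have "m > 0" unfolding m_def using quotient_of_denom_pos' by (intro prod_pos) simp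
  moreover have "of_nat m * r t \<in> \<int>" if "t \<in> A" for t
  proof -
    obtain n d where q: "quotient_of (r t) = (n, d)" by (cases "quotient_of (r t)") auto
    have "d > 0" using quotient_of_denom_pos[OF q] .
    have "nat d dvd m" unfolding m_def using dvd_prodI[OF assms that] q by (metis snd_conv)
    then obtain e where "m = nat d * e" by (elim dvdE)
    then have "of_nat m * r t = of_int (n * int e)"
      using \<open>d > 0\<close> quotient_of_div[OF q] by simp
    then show ?thesis by (simp add: Ints_of_int)
  qed
  ultimately show ?thesis using that by blast
qed

text \<open>Clear the denominators of \<open>v\<close> in terms of \<open>T\<close>, then add enough copies of \<open>\<Sum>T\<close> to make
  all coefficients non-negative.\<close>
lemma Nspan_scaled_shift:
  fixes T :: "(int^'n) set"
  assumes "finite T" "to_rat v \<in> vec.span (to_rat ` T)"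
  obtains m K :: nat where "m > 0" "of_nat m *s v + of_nat K *s (\<Sum>T) \<in> Nspan T"
proof -
  obtain u where u: "to_rat v = (\<Sum>w\<in>to_rat ` T. u w *s w)"
    using assms(2) unfolding vec.span_finite[OF finite_imageI[OF assms(1)]] by auto
  define r where "r t = u (to_rat t)" for t
  have v: "to_rat v = (\<Sum>t\<in>T. r t *s to_rat t)"
    unfolding u r_def using inj_to_rat by (simp add: sum.reindex inj_on_def)
  obtain m where m: "m > 0" "\<And>t. t \<in> T \<Longrightarrow> of_nat m * r t \<in> \<int>"
    using common_denominator[OF assms(1)] by blast
  define a where "a t = \<lfloor>of_nat m * r t\<rfloor>" for t
  have a: "of_nat m * r t = of_int (a t)" if "t \<in> T" for t
    using m(2)[OF that] unfolding a_def by (elim Ints_cases) simp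
  have "to_rat (of_nat m *s v) = (\<Sum>t\<in>T. (of_nat m * r t) *s to_rat t)"
    by (simp add: v vec.scale_sum_right vector_smult_assoc)
  also have "\<dots> = to_rat (\<Sum>t\<in>T. a t *s t)"
    using a by (simp add: to_rat_sum)
  finally have mv: "of_nat m *s v = (\<Sum>t\<in>T. a t *s t)" by (simp only: to_rat_eq_iff)
  define K where "K = (\<Sum>t\<in>T. nat \<bar>a t\<bar>)"
  have "nat \<bar>a t\<bar> \<le> K" if "t \<in> T" for t
    unfolding K_def using that assms(1) by (intro member_le_sum) auto
  then have "0 \<le> a t + int K" if "t \<in> T" for t
    using that by fastforce
  then have nonneg: "(a t + int K) *s t = of_nat (nat (a t + int K)) *s t" if "t \<in> T" for t
    using that by simp
  have "of_nat K *s (\<Sum>T) = (\<Sum>t\<in>T. of_nat K *s t)"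
    by (induction T rule: infinite_finite_induct) (simp_all add: vector_add_ldistrib)
  then have "of_nat m *s v + of_nat K *s (\<Sum>T) = (\<Sum>t\<in>T. (a t + int K) *s t)"
    unfolding mv by (simp add: vector_sadd_rdistrib sum.distrib)
  also have "\<dots> = (\<Sum>t\<in>T. of_nat (nat (a t + int K)) *s t)"
    using nonneg by (rule sum.cong[OF refl])
  also have "\<dots> \<in> Nspan T" by (rule sum_in_Nspan)
  finally show ?thesis using that m(1) by blast
qed

lemma preservant_shift_into_Nspan:
  fixes B F T :: "(int^'n) set"
  assumes "finite B" "x \<in> linset B F" "finite T" "T \<subseteq> Nspan F"
    "vec.span (to_rat ` F) \<subseteq> vec.span (to_rat ` T)" "v \<in> preservants (linset B F)"
  obtains t where "t \<in> preservants (linset B F)" "v + t \<in> Nspan T"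
proof -
  have "to_rat v \<in> vec.span (to_rat ` T)"
    using preservant_in_span[OF assms(1,2,6)] assms(5) by blast
  then obtain m K where mK: "m > 0" "of_nat m *s v + of_nat K *s (\<Sum>T) \<in> Nspan T"
    using Nspan_scaled_shift[OF assms(3)] by blast
  have "(\<Sum>T) \<in> Nspan F" using assms(4) by (intro Nspan_sum) auto
  then have "(\<Sum>T) \<in> preservants (linset B F)" using Nspan_subset_preservants by blast
  then have "of_nat (m - 1) *s v + of_nat K *s (\<Sum>T) \<in> preservants (linset B F)"
    by (intro preservants_add preservants_scale assms(6))
  moreover have "v + (of_nat (m - 1) *s v + of_nat K *s (\<Sum>T)) = of_nat m *s v + of_nat K *s (\<Sum>T)"
    using mK(1) by (simp add: vec_eq_iff algebra_simps of_nat_diff)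
  ultimately show ?thesis using that mK(2) by (metis (no_types))
qed

text \<open>Non-degeneracy makes \<open>\<nat>(F) \<inter> \<nat>(F')\<close> span the span of \<open>F\<close>; a finite spanning subset of
  it then absorbs every preservant of \<open>B + \<nat>(F)\<close>.\<close>
lemma preservant_shift_into_other:
  fixes B F B' F' :: "(int^'n) set"
  assumes "finite B" "finite F" "finite B'" "finite F'" "x \<in> linset B F \<inter> linset B' F'"
    "zdim (linset B F \<inter> linset B' F') = zdim (linset B F)" "v \<in> preservants (linset B F)"
  obtains t where "t \<in> preservants (linset B F)" "v + t \<in> preservants (linset B' F')"
proof -
  let ?M = "Nspan F \<inter> Nspan F'"
  obtain C where C: "finite C" "C \<subseteq> linset B F \<inter> linset B' F'"
    "\<forall>y \<in> linset B F \<inter> linset B' F'. \<exists>c\<in>C. y - c \<in> ?M"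
    by (rule linset_Int_decomp[OF assms(1-4)])
  have x: "x \<in> linset B F" using assms(5) by blast
  then obtain b where "b \<in> B" unfolding linset_def by blast
  then have span: "vec.span (to_rat ` ?M) = vec.span (to_rat ` F)"
    by (rule span_eq_if_zdim_eq[OF assms(2) _ C(1) Int_lower1 C(3)[rule_format] assms(6)])
  obtain T where T: "finite T" "T \<subseteq> ?M" "vec.span (to_rat ` T) = vec.span (to_rat ` ?M)"
    by (rule finite_subset_same_span)
  have "T \<subseteq> Nspan F" using T(2) by blast
  moreover have "vec.span (to_rat ` F) \<subseteq> vec.span (to_rat ` T)" unfolding T(3) span ..
  ultimately obtain t where t: "t \<in> preservants (linset B F)" "v + t \<in> Nspan T"
    by (rule preservant_shift_into_Nspan[OF assms(1) x T(1) _ _ assms(7)])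
  have "Nspan T \<subseteq> Nspan F'" using T(1,2) assms(4) by (intro Nspan_mono) auto
  then have "v + t \<in> preservants (linset B' F')" using t(2) Nspan_subset_preservants by blast
  then show ?thesis using that t(1) by blast
qed

text \<open>How two upper bounds, one for each order, are merged into one for both.\<close>
lemma common_difference_in_Int:
  fixes P P' :: "'a::ab_group_add set"
  assumes add_P: "\<And>x y. x \<in> P \<Longrightarrow> y \<in> P \<Longrightarrow> x + y \<in> P"
    and add_P': "\<And>x y. x \<in> P' \<Longrightarrow> y \<in> P' \<Longrightarrow> x + y \<in> P'"
    and shift_P: "\<And>v. v \<in> P \<Longrightarrow> \<exists>t\<in>P. v + t \<in> P'"
    and shift_P': "\<And>v. v \<in> P' \<Longrightarrow> \<exists>t\<in>P'. v + t \<in> P"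
    and "p \<in> P" "q \<in> P" "p' \<in> P'" "q' \<in> P'" "p - q = p' - q'"
  obtains a c where "a \<in> P \<inter> P'" "c \<in> P \<inter> P'" "a - c = p - q"
proof -
  obtain t where t: "t \<in> P'" "q' + t \<in> P" using shift_P' \<open>q' \<in> P'\<close> by blast
  obtain t' where t': "t' \<in> P" "q + t' \<in> P'" using shift_P \<open>q \<in> P\<close> by blast
  define a where "a = p + q' + t + t'"
  define c where "c = q + q' + t + t'"
  have "a = p + (q' + t) + t'" unfolding a_def by (simp add: algebra_simps)
  then have "a \<in> P" using add_P[OF add_P[OF \<open>p \<in> P\<close> t(2)] t'(1)] by simp
  moreover have "a = p' + (q + t') + t"
    unfolding a_def using \<open>p - q = p' - q'\<close> by (simp add: algebra_simps)
  then have "a \<in> P'" using add_P'[OF add_P'[OF \<open>p' \<in> P'\<close> t'(2)] t(1)] by simp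
  moreover have "c = (q' + t) + q + t'" unfolding c_def by (simp add: algebra_simps)
  then have "c \<in> P" using add_P[OF add_P[OF t(2) \<open>q \<in> P\<close>] t'(1)] by simp
  moreover have "c = (q + t') + q' + t" unfolding c_def by (simp add: algebra_simps)
  then have "c \<in> P'" using add_P'[OF add_P'[OF t'(2) \<open>q' \<in> P'\<close>] t(1)] by simp
  moreover have "a - c = p - q" unfolding a_def c_def by simp
  ultimately show ?thesis using that by blast
qed

lemma directed_Int:
  assumes "directed_hybridlinear L" "directed_hybridlinear L'" "nondegenerate_intersection L L'"
    "x \<in> L \<inter> L'" "y \<in> L \<inter> L'"
  shows "\<exists>z\<in>L \<inter> L'. ple (preservants (L \<inter> L')) x z \<and> ple (preservants (L \<inter> L')) y z"
proof -
  obtain B F where BF: "finite B" "finite F" "L = linset B F"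
    using assms(1) unfolding directed_hybridlinear_def hybridlinear_iff_linset by blast
  obtain B' F' where BF': "finite B'" "finite F'" "L' = linset B' F'"
    using assms(2) unfolding directed_hybridlinear_def hybridlinear_iff_linset by blast
  have x: "x \<in> linset B F \<inter> linset B' F'" "x \<in> linset B' F' \<inter> linset B F"
    using assms(4) unfolding BF(3) BF'(3) by auto
  have dims: "zdim (linset B F \<inter> linset B' F') = zdim (linset B F)"
    "zdim (linset B' F' \<inter> linset B F) = zdim (linset B' F')"
    using assms(3) unfolding nondegenerate_intersection_def BF(3) BF'(3) by (simp_all add: Int_commute)
  have shift: "\<exists>t\<in>preservants L. v + t \<in> preservants L'" if v: "v \<in> preservants L" for v
  proof -
    obtain t where "t \<in> preservants (linset B F)" "v + t \<in> preservants (linset B' F')"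
      by (rule preservant_shift_into_other[OF BF(1,2) BF'(1,2) x(1) dims(1) v[unfolded BF(3)]])
    then show ?thesis unfolding BF(3) BF'(3) by blast
  qed
  have shift': "\<exists>t\<in>preservants L'. v + t \<in> preservants L" if v: "v \<in> preservants L'" for v
  proof -
    obtain t where "t \<in> preservants (linset B' F')" "v + t \<in> preservants (linset B F)"
      by (rule preservant_shift_into_other[OF BF'(1,2) BF(1,2) x(2) dims(2) v[unfolded BF'(3)]])
    then show ?thesis unfolding BF(3) BF'(3) by blast
  qed
  obtain z where z: "z - x \<in> preservants L" "z - y \<in> preservants L"
    using assms(1,4,5) unfolding directed_hybridlinear_def ple_def by blast
  obtain z' where z': "z' - x \<in> preservants L'" "z' - y \<in> preservants L'"
    using assms(2,4,5) unfolding directed_hybridlinear_def ple_def by blast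
  have "(z - x) - (z - y) = (z' - x) - (z' - y)" by simp
  then obtain a c where "a \<in> preservants L \<inter> preservants L'" "c \<in> preservants L \<inter> preservants L'"
    and ac: "a - c = (z - x) - (z - y)"
    using common_difference_in_Int[of "preservants L" "preservants L'",
        OF preservants_add preservants_add shift shift' z z'] by blast
  then have a: "a \<in> preservants (L \<inter> L')" and c: "c \<in> preservants (L \<inter> L')"
    using preservants_Int by blast+
  have "x + a - y = c" using ac by (simp add: algebra_simps)
  show ?thesis
  proof (rule bexI[of _ "x + a"])
    show "x + a \<in> L \<inter> L'" using a assms(4) unfolding preservants_def by blast
    show "ple (preservants (L \<inter> L')) x (x + a) \<and> ple (preservants (L \<inter> L')) y (x + a)"
      unfolding ple_def using a c \<open>x + a - y = c\<close> by simp
  qed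
qed

theorem mainTheorem16:
  fixes L L' :: "(int ^ 'n) set"
  assumes "L \<subseteq> natvecs" and "L' \<subseteq> natvecs"
    and "directed_hybridlinear L" and "directed_hybridlinear L'"
    and "nondegenerate_intersection L L'"
  shows "directed_hybridlinear (L \<inter> L')"
proof -
  have hybrid: "hybridlinear (L \<inter> L')"
    using assms(3,4) unfolding directed_hybridlinear_def by (intro hybridlinear_Int) simp_all
  moreover have "wqo_on (L \<inter> L') (ple (preservants (L \<inter> L')))"
    using hybrid assms(1) by (intro wqo_on_hybridlinear) auto
  moreover have "\<forall>x\<in>L \<inter> L'. \<forall>y\<in>L \<inter> L'. \<exists>z\<in>L \<inter> L'.
      ple (preservants (L \<inter> L')) x z \<and> ple (preservants (L \<inter> L')) y z"
    using directed_Int[OF assms(3-5)] by blast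
  ultimately show ?thesis unfolding directed_hybridlinear_def by blast
qed

end
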